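(* Let $d=1$ and let $\mathcal{U}$ be an update family on $\mathbb{Z}$ for which $-1$ is a stable direction (i.e. no $X\in\mathcal{U}$ satisfies $X\subset\{1,2,3,\dots\}$). Let $n\ge1$ and assume $\mathcal{H}_{n-1}$ holds. Then for every $\Lambda\subset\mathbb{Z}$ with $\mathcal{P}_n\subset\Lambda$ and every $\eta\in V(n,\Lambda)\setminus\{1_\Lambda\}$, $\eta$ has at least one zero in $\Lambda\setminus\mathcal{P}_{n-1}$.
   Context: An update family is a set $\mathcal{U}$ of finitely many finite nonempty subsets of $\mathbb{Z}\setminus\{0\}$. For $\Lambda\subset\mathbb{Z}$, configurations are elements of $\{0,1\}^\Lambda$; $1_\Lambda$ is the all-ones configuration; $\eta^s$ is $\eta$ with the state at $s$ flipped. A move from $\eta$ to $\eta'$ is legal if $\eta'=\eta$, or $\eta'=\eta^s$ for some $s\in\Lambda$ and some $X\in\mathcal{U}$ has all sites of $s+X$ in state $0$ in the configuration equal to $\eta$ on $\Lambda$ and $0$ outside $\Lambda$. A legal path is a finite sequence $(\eta^j)_{0\le j\le m}$, $m\ge 1$, with all consecutive moves legal; it is $n$-legal if every $\eta^j$ has at most $n$ zeroes in $\Lambda$. $V(n,\Lambda)$ is the set of configurations reachable from $1_\Lambda$ by an $n$-legal path. Let $r=\max\{|x-y| : x,y\in X\cup\{0\}, X\in\mathcal{U}\}$, and for $n\in\mathbb{N}$ let $a_n=r(2^n-1)$, $b_n=rn2^{n-1}$, $\mathcal{P}_n=\{-a_n,\dots,b_n\}$. $\mathcal{H}_n$ denotes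 the statement: for every $\Lambda\subset\mathbb{Z}$ with $\mathcal{P}_n\subset\Lambda$ and every $\eta\in V(n,\Lambda)$, $\eta_0=1$. *)

theory Defs
  imports Main
begin

definition update_family :: "int set set \<Rightarrow> bool" where
  "update_family U \<longleftrightarrow> finite U \<and> (\<forall>X\<in>U. finite X \<and> X \<noteq> {} \<and> 0 \<notin> X)"

(* Configurations in {0,1}^Lambda are modelled as functions int => bool
   (True = state 1, False = state 0) that are normalised to True outside Lambda. *)
definition config :: "int set \<Rightarrow> (int \<Rightarrow> bool) \<Rightarrow> bool" where
  "config \<Lambda> \<eta> \<longleftrightarrow> (\<forall>x. x \<notin> \<Lambda> \<longrightarrow> \<eta> x)"

definition ones :: "int \<Rightarrow> bool" where
  "ones = (\<lambda>_. True)"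

definition zeros :: "int set \<Rightarrow> (int \<Rightarrow> bool) \<Rightarrow> int set" where
  "zeros \<Lambda> \<eta> = {x \<in> \<Lambda>. \<not> \<eta> x}"

definition flip :: "(int \<Rightarrow> bool) \<Rightarrow> int \<Rightarrow> (int \<Rightarrow> bool)" where
  "flip \<eta> s = \<eta>(s := \<not> \<eta> s)"

(* some X in U has s+X entirely in state 0, where eta is extended by 0 outside Lambda *)
definition constraint :: "int set set \<Rightarrow> int set \<Rightarrow> (int \<Rightarrow> bool) \<Rightarrow> int \<Rightarrow> bool" where
  "constraint U \<Lambda> \<eta> s \<longleftrightarrow> (\<exists>X\<in>U. \<forall>x\<in>X. s + x \<in> \<Lambda> \<longrightarrow> \<not> \<eta> (s + x))"

definition legal_move :: "int set set \<Rightarrow> int set \<Rightarrow> (int \<Rightarrow> bool) \<Rightarrow> (int \<Rightarrow> bool) \<Rightarrow> bool" where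
  "legal_move U \<Lambda> \<eta> \<eta>' \<longleftrightarrow>
     \<eta>' = \<eta> \<or> (\<exists>s\<in>\<Lambda>. \<eta>' = flip \<eta> s \<and> constraint U \<Lambda> \<eta> s)"

definition at_most_zeros :: "nat \<Rightarrow> int set \<Rightarrow> (int \<Rightarrow> bool) \<Rightarrow> bool" where
  "at_most_zeros n \<Lambda> \<eta> \<longleftrightarrow> finite (zeros \<Lambda> \<eta>) \<and> card (zeros \<Lambda> \<eta>) \<le> n"

definition n_legal_path :: "int set set \<Rightarrow> nat \<Rightarrow> int set \<Rightarrow> (nat \<Rightarrow> int \<Rightarrow> bool) \<Rightarrow> nat \<Rightarrow> bool" where
  "n_legal_path U n \<Lambda> p m \<longleftrightarrow> m \<ge> 1 \<and>
     (\<forall>j\<le>m. config \<Lambda> (p j) \<and> at_most_zeros n \<Lambda> (p j)) \<and>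
     (\<forall>j<m. legal_move U \<Lambda> (p j) (p (Suc j)))"

definition V :: "int set set \<Rightarrow> nat \<Rightarrow> int set \<Rightarrow> (int \<Rightarrow> bool) set" where
  "V U n \<Lambda> = {\<eta>. \<exists>p m. n_legal_path U n \<Lambda> p m \<and> p 0 = ones \<and> p m = \<eta>}"

definition range_r :: "int set set \<Rightarrow> int" where
  "range_r U = Max {\<bar>x - y\<bar> | x y X. X \<in> U \<and> x \<in> insert 0 X \<and> y \<in> insert 0 X}"

definition a_seq :: "int set set \<Rightarrow> nat \<Rightarrow> int" where
  "a_seq U n = range_r U * (2 ^ n - 1)"

definition b_seq :: "int set set \<Rightarrow> nat \<Rightarrow> int" where
  "b_seq U n = range_r U * int n * 2 ^ (n - 1)"

definition P_set :: "int set set \<Rightarrow> nat \<Rightarrow> int set" where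
  "P_set U n = {- a_seq U n .. b_seq U n}"

definition H :: "int set set \<Rightarrow> nat \<Rightarrow> bool" where
  "H U n \<longleftrightarrow> (\<forall>\<Lambda>. P_set U n \<subseteq> \<Lambda> \<longrightarrow> (\<forall>\<eta>\<in>V U n \<Lambda>. \<eta> 0))"

end

theory Submission
  imports Defs
begin

text \<open>
  Only the zero sets matter. Since \<open>-1\<close> is a stable direction, every update rule contains a
  site in \<open>[-r, 0)\<close>, so a flip at \<open>s\<close> needs a zero (or a site outside \<open>\<Lambda>\<close>) in \<open>[s - r, s)\<close>:
  zeros are only facilitated from the left. By induction on \<open>k\<close>, along paths with at most \<open>k\<close>
  zeros no zero ever enters an initially zero-free interval \<open>(\<beta>, \<gamma>]\<close> beyond \<open>\<beta> + r (2^k - 1)\<close>.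
  For \<open>k + 1\<close> zeros and \<open>d = r (2^k - 1)\<close>, the leftmost zero \<open>u\<close> in the interval always
  satisfies \<open>u \<le> \<beta> + d + r\<close>: otherwise look at the last time \<open>u\<close> became a zero; its
  facilitating zero lies in \<open>[u - r, u)\<close>, beyond \<open>\<beta> + d\<close>, yet running time backwards from
  then, the sites left of \<open>u\<close> carry at most \<open>k\<close> zeros. Hence \<open>(\<beta> + d + r, \<gamma>]\<close> never carries
  more than \<open>k\<close> zeros, and the induction hypothesis applied to it gives the bound \<open>2 d + r\<close>.
  For the theorem, the leftmost zero \<open>L\<close> of \<open>\<eta>\<close> lies in \<open>P_{n-1}\<close> and \<open>(-a_n - 1, L]\<close> lies in
  \<open>P_n \<subseteq> \<Lambda>\<close>, so \<open>L \<le> -a_n - 1 + a_{n-1} + r = -a_{n-1} - 1\<close>, a contradiction.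
\<close>

text \<open>Zero sets of configurations; sites outside \<open>\<Lambda>\<close> count as zeros when facilitating a flip.\<close>

definition facilitated_step :: "int \<Rightarrow> int set \<Rightarrow> int set \<Rightarrow> int set \<Rightarrow> bool" where
  "facilitated_step r \<Lambda> A B \<longleftrightarrow>
     A = B \<or> (\<exists>s\<in>\<Lambda>. A - {s} = B - {s} \<and> (\<exists>y\<in>{s - r..<s}. y \<notin> \<Lambda> \<or> y \<in> A))"

definition facilitated_path :: "int \<Rightarrow> int set \<Rightarrow> nat \<Rightarrow> (nat \<Rightarrow> int set) \<Rightarrow> nat \<Rightarrow> bool" where
  "facilitated_path r \<Lambda> k q M \<longleftrightarrow>
     (\<forall>t\<le>M. q t \<subseteq> \<Lambda> \<and> finite (q t) \<and> card (q t) \<le> k) \<and>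
     (\<forall>t<M. facilitated_step r \<Lambda> (q t) (q (Suc t)))"

lemma facilitated_step_sym:
  assumes "facilitated_step r \<Lambda> A B"
  shows "facilitated_step r \<Lambda> B A"
proof (cases "A = B")
  case False
  then obtain s y where s: "s \<in> \<Lambda>" "A - {s} = B - {s}" "y \<in> {s - r..<s}" "y \<notin> \<Lambda> \<or> y \<in> A"
    using assms unfolding facilitated_step_def by blast
  then have "y \<notin> \<Lambda> \<or> y \<in> B" by auto
  with s show ?thesis unfolding facilitated_step_def by metis
qed (simp add: facilitated_step_def)

lemma facilitated_step_restrict:
  assumes "facilitated_step r \<Lambda> A B" "\<Lambda>' \<subseteq> \<Lambda>"
  shows "facilitated_step r \<Lambda>' (A \<inter> \<Lambda>') (B \<inter> \<Lambda>')"
proof (cases "A = B")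
  case False
  then obtain s y where s: "s \<in> \<Lambda>" "A - {s} = B - {s}" "y \<in> {s - r..<s}" "y \<notin> \<Lambda> \<or> y \<in> A"
    using assms(1) unfolding facilitated_step_def by blast
  show ?thesis
  proof (cases "s \<in> \<Lambda>'")
    case True
    then show ?thesis using s assms(2) unfolding facilitated_step_def by blast
  next
    case False
    then have "A \<inter> \<Lambda>' = B \<inter> \<Lambda>'" using s(2) by blast
    then show ?thesis unfolding facilitated_step_def by simp
  qed
qed (simp add: facilitated_step_def)

lemma facilitated_path_restrict:
  assumes "facilitated_path r \<Lambda> k q M" "\<Lambda>' \<subseteq> \<Lambda>"
    and "\<And>t. t \<le> M \<Longrightarrow> card (q t \<inter> \<Lambda>') \<le> k'"
  shows "facilitated_path r \<Lambda>' k' (\<lambda>t. q t \<inter> \<Lambda>') M"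
  using assms facilitated_step_restrict unfolding facilitated_path_def by auto

lemma facilitated_path_rev:
  assumes "facilitated_path r \<Lambda> k q M" "i \<le> j" "j \<le> M"
  shows "facilitated_path r \<Lambda> k (\<lambda>s. q (j - s)) (j - i)"
proof -
  have "facilitated_step r \<Lambda> (q (j - t)) (q (j - Suc t))" if t: "t < j - i" for t
  proof -
    have "facilitated_step r \<Lambda> (q (j - Suc t)) (q (Suc (j - Suc t)))"
      using assms t unfolding facilitated_path_def by simp
    moreover have "Suc (j - Suc t) = j - t" using t by simp
    ultimately show ?thesis using facilitated_step_sym by metis
  qed
  with assms show ?thesis unfolding facilitated_path_def by simp
qed

lemma facilitated_path_const:
  assumes "facilitated_path r \<Lambda> k q M" "r \<le> 0" "t \<le> M"
  shows "q t = q 0"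
  using assms(3)
proof (induction t)
  case (Suc t)
  from Suc.prems have "facilitated_step r \<Lambda> (q t) (q (Suc t))"
    using assms(1) unfolding facilitated_path_def by simp
  with assms(2) have "q (Suc t) = q t" unfolding facilitated_step_def by auto
  with Suc show ?case by simp
qed simp

lemma last_zero_creation:
  assumes path: "facilitated_path r \<Lambda> (Suc k) q M"
    and "s0 \<le> M" "T \<le> s0" "u \<notin> q T" "u \<in> q s0"
  obtains t :: nat and y where "T \<le> t" "t < s0" "u - r \<le> y" "y < u" "y \<in> \<Lambda> \<Longrightarrow> y \<in> q t"
    and "facilitated_path r (\<Lambda> \<inter> {..<u}) k (\<lambda>s. q (s0 - s) \<inter> (\<Lambda> \<inter> {..<u})) (s0 - t)"
proof -
  have "T < s0" using assms(3-5) le_neq_implies_less by blast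
  have "\<exists>t. (T \<le> t \<and> t < s0 \<and> u \<notin> q t) \<and> (\<forall>s. T \<le> s \<and> s < s0 \<and> u \<notin> q s \<longrightarrow> s \<le> t)"
    by (rule ex_has_greatest_nat[where k = T and b = s0]) (use \<open>T < s0\<close> assms(4) in auto)
  then obtain t where t: "T \<le> t" "t < s0" "u \<notin> q t"
    and last: "\<And>s. T \<le> s \<Longrightarrow> s < s0 \<Longrightarrow> u \<notin> q s \<Longrightarrow> s \<le> t"
    by blast
  have zero_after: "u \<in> q s" if "t < s" "s \<le> s0" for s
  proof (cases "s = s0")
    case False
    then show ?thesis using last[of s] that t(1) by linarith
  qed (use assms(5) in simp)
  have "facilitated_step r \<Lambda> (q t) (q (Suc t))"
    using path t(2) assms(2) unfolding facilitated_path_def by simp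
  moreover have "u \<in> q (Suc t)" using zero_after t(2) by simp
  ultimately obtain v y where agree: "q t - {v} = q (Suc t) - {v}"
    and y: "y \<in> {v - r..<v}" "y \<notin> \<Lambda> \<or> y \<in> q t"
    using t(3) unfolding facilitated_step_def by blast
  have "v = u" using agree t(3) \<open>u \<in> q (Suc t)\<close> by blast
  define W where "W = \<Lambda> \<inter> {..<u}"
  have "card (q (s0 - s) \<inter> W) \<le> k" if "s \<le> s0 - t" for s
  proof -
    define s' where "s' = max (s0 - s) (Suc t)"
    have "q (s0 - s) \<inter> W = q s' \<inter> W"
    proof (cases "s0 - s = t")
      case True
      then show ?thesis using agree \<open>v = u\<close> t(2) unfolding s'_def W_def by auto
    next
      case False
      then have "Suc t \<le> s0 - s" using that t(2) by linarith
      then show ?thesis unfolding s'_def by (simp add: max_absorb1)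
    qed
    moreover have "u \<in> q s'" "s' \<le> M"
      using zero_after that t(2) assms(2) unfolding s'_def by auto
    moreover have "finite (q s')" "card (q s') \<le> Suc k"
      using path \<open>s' \<le> M\<close> unfolding facilitated_path_def by auto
    moreover have "q s' \<inter> W \<subset> q s'" using \<open>u \<in> q s'\<close> unfolding W_def by auto
    ultimately show ?thesis using psubset_card_mono[of "q s'" "q s' \<inter> W"] by simp
  qed
  then have "facilitated_path r W k (\<lambda>s. q (s0 - s) \<inter> W) (s0 - t)"
    using facilitated_path_restrict[OF facilitated_path_rev[OF path]] t(2) assms(2)
    unfolding W_def by simp
  then show thesis using that t(1,2) y \<open>v = u\<close> unfolding W_def by auto
qed

definition zero_penetration :: "int \<Rightarrow> nat \<Rightarrow> int \<Rightarrow> bool" where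
  "zero_penetration r k d \<longleftrightarrow>
     (\<forall>\<Lambda> q M \<beta> \<gamma> t. facilitated_path r \<Lambda> k q M \<longrightarrow> {\<beta><..\<gamma>} \<subseteq> \<Lambda> \<longrightarrow>
        q 0 \<inter> {\<beta><..\<gamma>} = {} \<longrightarrow> t \<le> M \<longrightarrow> q t \<inter> {\<beta> + d<..\<gamma>} = {})"

lemma zero_penetrationD:
  assumes "zero_penetration r k d" "facilitated_path r \<Lambda> k q M"
    and "{\<beta><..\<gamma>} \<subseteq> \<Lambda>" "q 0 \<inter> {\<beta><..\<gamma>} = {}" "t \<le> M"
  shows "q t \<inter> {\<beta> + d<..\<gamma>} = {}"
  using assms unfolding zero_penetration_def by blast

lemma leftmost_zero_bound:
  assumes penetration: "zero_penetration r k d" and "0 \<le> r" "0 \<le> d"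
    and path: "facilitated_path r \<Lambda> (Suc k) q M"
    and interval: "{\<beta><..\<gamma>} \<subseteq> \<Lambda>" "q 0 \<inter> {\<beta><..\<gamma>} = {}"
    and zero: "s \<le> M" "u \<in> q s" "u \<le> \<gamma>" "q s \<inter> {\<beta><..<u} = {}"
  shows "u \<le> \<beta> + d + r"
proof (rule ccontr)
  assume far: "\<not> u \<le> \<beta> + d + r"
  then have "u \<notin> q 0" using interval(2) zero(3) \<open>0 \<le> r\<close> \<open>0 \<le> d\<close> by auto
  then obtain t y where t: "t < s" and y: "u - r \<le> y" "y < u" "y \<in> \<Lambda> \<Longrightarrow> y \<in> q t"
    and reversed: "facilitated_path r (\<Lambda> \<inter> {..<u}) k (\<lambda>s'. q (s - s') \<inter> (\<Lambda> \<inter> {..<u})) (s - t)"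
    using last_zero_creation[OF path zero(1) le0 _ zero(2)] by metis
  have "{\<beta><..u - 1} \<subseteq> \<Lambda> \<inter> {..<u}" using interval(1) zero(3) by auto
  then have "(\<lambda>s'. q (s - s') \<inter> (\<Lambda> \<inter> {..<u})) (s - t) \<inter> {\<beta> + d<..u - 1} = {}"
    by (rule zero_penetrationD[OF penetration reversed]) (use zero(4) in auto)
  moreover have "y \<in> {\<beta> + d<..u - 1}" "y \<in> \<Lambda>"
    using y(1,2) far interval(1) zero(3) \<open>0 \<le> d\<close> by auto
  ultimately show False using y(2,3) t by auto
qed

lemma zero_penetration_Suc:
  assumes penetration: "zero_penetration r k d" and "0 \<le> r" "0 \<le> d"
  shows "zero_penetration r (Suc k) (2 * d + r)"
  unfolding zero_penetration_def
proof (intro allI impI)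
  fix \<Lambda> q M \<beta> \<gamma> t
  assume path: "facilitated_path r \<Lambda> (Suc k) q M" and interval: "{\<beta><..\<gamma>} \<subseteq> \<Lambda>"
    and init: "q 0 \<inter> {\<beta><..\<gamma>} = {}" and "t \<le> M"
  define Y where "Y = {\<beta> + d + r<..\<gamma>}"
  \<comment> \<open>Whenever \<open>Y\<close> contains a zero, the leftmost zero lies left of \<open>Y\<close>.\<close>
  have "Y \<subseteq> {\<beta><..\<gamma>}" unfolding Y_def using assms(2,3) by auto
  have "card (q s \<inter> Y) \<le> k" if "s \<le> M" for s
  proof (cases "q s \<inter> Y = {}")
    case False
    have "finite (q s)" "card (q s) \<le> Suc k"
      using path that unfolding facilitated_path_def by auto
    define u where "u = Min (q s)"
    have "q s \<noteq> {}" using False by blast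
    then have "u \<in> q s" "\<forall>z\<in>q s. u \<le> z"
      using \<open>finite (q s)\<close> unfolding u_def by auto
    then have "u \<le> \<gamma>" "q s \<inter> {\<beta><..<u} = {}"
      using False unfolding Y_def by fastforce+
    then have "u \<le> \<beta> + d + r"
      using leftmost_zero_bound[OF penetration assms(2,3) path interval init that \<open>u \<in> q s\<close>] by simp
    then have "u \<notin> Y" unfolding Y_def by simp
    then have "q s \<inter> Y \<subset> q s" using \<open>u \<in> q s\<close> by blast
    then have "card (q s \<inter> Y) < card (q s)" by (rule psubset_card_mono[OF \<open>finite (q s)\<close>])
    then show ?thesis using \<open>card (q s) \<le> Suc k\<close> by linarith
  qed simp
  moreover have "Y \<subseteq> \<Lambda>" using \<open>Y \<subseteq> {\<beta><..\<gamma>}\<close> interval by blast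
  ultimately have "facilitated_path r Y k (\<lambda>s. q s \<inter> Y) M"
    using facilitated_path_restrict[OF path] by blast
  moreover have "q 0 \<inter> Y \<inter> {\<beta> + d + r<..\<gamma>} = {}" using init \<open>Y \<subseteq> {\<beta><..\<gamma>}\<close> by blast
  ultimately have "q t \<inter> Y \<inter> {\<beta> + d + r + d<..\<gamma>} = {}"
    using zero_penetrationD[OF penetration, of Y "\<lambda>s. q s \<inter> Y" M] \<open>t \<le> M\<close> unfolding Y_def by blast
  moreover have "\<beta> + d + r + d = \<beta> + (2 * d + r)" by simp
  ultimately show "q t \<inter> {\<beta> + (2 * d + r)<..\<gamma>} = {}" unfolding Y_def using assms(3) by auto
qed

lemma zero_penetration_bound:
  assumes "0 \<le> r"
  shows "zero_penetration r k (r * (2 ^ k - 1))"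
proof (induction k)
  case 0
  then show ?case unfolding zero_penetration_def facilitated_path_def by auto
next
  case (Suc k)
  have "0 \<le> r * (2 ^ k - 1)" using assms by simp
  with Suc.IH assms have "zero_penetration r (Suc k) (2 * (r * (2 ^ k - 1)) + r)"
    by (rule zero_penetration_Suc)
  moreover have "2 * (r * (2 ^ k - 1)) + r = r * (2 ^ Suc k - 1)" by (simp add: algebra_simps)
  ultimately show ?case by simp
qed

lemma range_r_ge:
  assumes "update_family U" "X \<in> U" "x \<in> insert 0 X"
  shows "\<bar>x\<bar> \<le> range_r U"
proof -
  let ?D = "{\<bar>x - y\<bar> | x y X. X \<in> U \<and> x \<in> insert 0 X \<and> y \<in> insert 0 X}"
  have "?D \<subseteq> (\<lambda>(x, y). \<bar>x - y\<bar>) ` (\<Union>X\<in>U. insert 0 X \<times> insert 0 X)" by fastforce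
  moreover have "finite (\<Union>X\<in>U. insert (0::int) X \<times> insert 0 X)"
    using assms(1) unfolding update_family_def by auto
  ultimately have "finite ?D" by (meson finite_imageI finite_subset)
  moreover have "\<bar>x - 0\<bar> \<in> ?D" using assms(2,3) by blast
  ultimately show ?thesis unfolding range_r_def using Max_ge by fastforce
qed

lemma stable_direction_left_element:
  assumes "update_family U" "\<not> (\<exists>X\<in>U. X \<subseteq> {1..})" "X \<in> U"
  obtains x where "x \<in> X" "- range_r U \<le> x" "x < 0"
proof -
  obtain x where x: "x \<in> X" "x < 1" using assms(2,3) by (meson atLeast_iff not_le subsetI)
  moreover have "x \<noteq> 0" using x(1) assms(1,3) unfolding update_family_def by blast
  moreover have "\<bar>x\<bar> \<le> range_r U" using range_r_ge[OF assms(1,3)] x(1) by blast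
  ultimately show thesis using that by auto
qed

lemma n_legal_path_facilitated:
  assumes "update_family U" "\<not> (\<exists>X\<in>U. X \<subseteq> {1..})" "n_legal_path U n \<Lambda> p m"
  shows "facilitated_path (range_r U) \<Lambda> n (\<lambda>t. zeros \<Lambda> (p t)) m"
proof -
  have "facilitated_step (range_r U) \<Lambda> (zeros \<Lambda> \<eta>) (zeros \<Lambda> \<eta>')"
    if move: "legal_move U \<Lambda> \<eta> \<eta>'" for \<eta> \<eta>'
  proof (cases "\<eta>' = \<eta>")
    case False
    then obtain s X where s: "s \<in> \<Lambda>" "\<eta>' = flip \<eta> s" "X \<in> U"
      and empty: "\<forall>x\<in>X. s + x \<in> \<Lambda> \<longrightarrow> \<not> \<eta> (s + x)"
      using move unfolding legal_move_def constraint_def by blast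
    obtain x where x: "x \<in> X" "- range_r U \<le> x" "x < 0"
      using stable_direction_left_element[OF assms(1,2) s(3)] .
    have "zeros \<Lambda> \<eta> - {s} = zeros \<Lambda> \<eta>' - {s}" unfolding s(2) zeros_def flip_def by auto
    moreover have "s + x \<in> {s - range_r U..<s}" "s + x \<notin> \<Lambda> \<or> s + x \<in> zeros \<Lambda> \<eta>"
      using x empty unfolding zeros_def by auto
    ultimately show ?thesis using s(1) unfolding facilitated_step_def by blast
  qed (simp add: facilitated_step_def)
  with assms(3) show ?thesis
    unfolding n_legal_path_def facilitated_path_def at_most_zeros_def zeros_def by auto
qed

lemma a_seq_Suc: "a_seq U (Suc k) = 2 * a_seq U k + range_r U"
  unfolding a_seq_def by (simp add: algebra_simps)

lemma b_seq_le_Suc: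
  assumes "0 \<le> range_r U"
  shows "b_seq U k \<le> b_seq U (Suc k)"
proof -
  have "(2::int) ^ (k - 1) \<le> 2 ^ k" by (rule power_increasing) auto
  then have "int k * 2 ^ (k - 1) \<le> int (Suc k) * 2 ^ k" by (intro mult_mono) auto
  then show ?thesis unfolding b_seq_def using mult_left_mono[OF _ assms] by (simp add: mult.assoc)
qed

theorem lemma3p1:
  fixes U :: "int set set" and n :: nat and \<Lambda> :: "int set" and \<eta> :: "int \<Rightarrow> bool"
  assumes "update_family U"
    and "\<not> (\<exists>X\<in>U. X \<subseteq> {1..})"
    and "n \<ge> 1"
    and "H U (n - 1)"
    and "P_set U n \<subseteq> \<Lambda>"
    and "\<eta> \<in> V U n \<Lambda> - {ones}"
  shows "\<exists>x \<in> \<Lambda> - P_set U (n - 1). \<not> \<eta> x"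
proof (rule ccontr)
  assume "\<not> ?thesis"
  then have zeros_in_P: "zeros \<Lambda> \<eta> \<subseteq> P_set U (n - 1)" unfolding zeros_def by blast
  obtain p m where legal: "n_legal_path U n \<Lambda> p m" "p 0 = ones" "p m = \<eta>"
    using assms(6) unfolding V_def by blast
  obtain k where n: "n = Suc k" using assms(3) by (cases n) auto
  define q where "q t = zeros \<Lambda> (p t)" for t
  have path: "facilitated_path (range_r U) \<Lambda> (Suc k) q m"
    using n_legal_path_facilitated[OF assms(1,2) legal(1)] unfolding q_def n .
  have "q 0 = {}" unfolding q_def legal(2) zeros_def ones_def by simp
  moreover have "q m \<noteq> {}"
    using assms(6) legal(1,3) unfolding q_def zeros_def n_legal_path_def config_def ones_def by fastforce
  ultimately have "0 \<le> range_r U" using facilitated_path_const[OF path] by force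
  define L where "L = Min (q m)"
  have "finite (q m)" using path unfolding facilitated_path_def by simp
  then have L: "L \<in> q m" "q m \<inter> {..<L} = {}"
    using \<open>q m \<noteq> {}\<close> unfolding L_def by (auto dest: Min_le[rotated])
  then have "- a_seq U k \<le> L" "L \<le> b_seq U k"
    using zeros_in_P legal(3) unfolding q_def n P_set_def by auto
  then have "{- a_seq U n - 1<..L} \<subseteq> \<Lambda>"
    using assms(5) b_seq_le_Suc[OF \<open>0 \<le> range_r U\<close>, of k] unfolding n P_set_def by auto
  moreover have "zero_penetration (range_r U) k (a_seq U k)" "0 \<le> a_seq U k"
    using zero_penetration_bound \<open>0 \<le> range_r U\<close> unfolding a_seq_def by simp_all
  ultimately have "L \<le> - a_seq U n - 1 + a_seq U k + range_r U"
    by (intro leftmost_zero_bound[where k = k and \<gamma> = L and s = m, OF _ _ _ path])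
      (use \<open>0 \<le> range_r U\<close> \<open>q 0 = {}\<close> L in auto)
  with \<open>- a_seq U k \<le> L\<close> show False unfolding n a_seq_Suc by linarith
qed

end
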